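(* Let $\varphi=\forall x_1\exists y_1\cdots\forall x_k\exists y_k\,P(x_1,y_1,\dots,x_k,y_k)$ be a positive Horn sentence over a finite relational signature $\sigma$, where $P$ is a conjunction of atomic $\sigma$-formulas containing no equalities. Then for every countable (finite or countably infinite) $\sigma$-structure $\mathcal{B}$ with $\mathcal{B}\models\varphi$, there is a surjective homomorphism $h:\mathcal{T}_\varphi(C_\omega)\to\mathcal{B}$ with $h(C_\omega)=B$.
   Context: Let $f_1,\dots,f_k$ be new function symbols, $f_i$ of arity $i$, and let $\mathrm{Sk}(\varphi)=\forall x_1\cdots\forall x_k\,P(x_1,f_1(x_1),\dots,x_k,f_k(x_1,\dots,x_k))$. Let $C_\omega=\{c_1,c_2,\dots\}$ be countably many new constant symbols. $T_\varphi(C_\omega)$ is the set of closed terms built from $C_\omega$ using $f_1,\dots,f_k$. The canonical model $\mathcal{T}_\varphi(C_\omega)$ is the $\sigma$-structure with domain $T_\varphi(C_\omega)$ in which $R(t_1,\dots,t_p)$ holds iff $R(t_1,\dots,t_p)$ is obtained from some atom of the matrix of $\mathrm{Sk}(\varphi)$ by substituting terms of $T_\varphi(C_\omega)$ for $x_1,\dots,x_k$ (function symbols interpreted syntactically). $C_\omega$ is viewed as a subset of $T_\varphi(C_\omega)$. *)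

theory Defs
  imports Main "HOL-Library.Countable_Set"
begin

datatype var = X nat | Y nat

text \<open>Terms over the new constants c_n (C n) and Skolem symbols f_i (F i args).\<close>
datatype sterm = C nat | F nat "sterm list"

text \<open>T_phi(C_omega): closed terms built from the constants with f_1..f_k, f_i of arity i.\<close>
inductive_set closed_terms :: "nat \<Rightarrow> sterm set" for k :: nat where
  const: "C n \<in> closed_terms k"
| func: "1 \<le> i \<Longrightarrow> i \<le> k \<Longrightarrow> length ts = i \<Longrightarrow> \<forall>t\<in>set ts. t \<in> closed_terms k
          \<Longrightarrow> F i ts \<in> closed_terms k"

text \<open>Substitution of terms s i for x_i in the matrix of Sk(phi): y_i becomes f_i(x_1,...,x_i).\<close>
fun sk_subst :: "(nat \<Rightarrow> sterm) \<Rightarrow> var \<Rightarrow> sterm" where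
  "sk_subst s (X i) = s i"
| "sk_subst s (Y i) = F i (map s [1..<Suc i])"

text \<open>Matrix P: list of atoms (R, argument variables); well-formedness w.r.t. the
  finite relational signature (sig, ar) and quantifier depth k.\<close>
definition wf_matrix :: "'r set \<Rightarrow> ('r \<Rightarrow> nat) \<Rightarrow> nat \<Rightarrow> ('r \<times> var list) list \<Rightarrow> bool" where
  "wf_matrix sig ar k P \<longleftrightarrow>
     (\<forall>(R, vs) \<in> set P. R \<in> sig \<and> length vs = ar R \<and>
        (\<forall>v \<in> set vs. \<exists>i. 1 \<le> i \<and> i \<le> k \<and> (v = X i \<or> v = Y i)))"

definition canon_rel :: "nat \<Rightarrow> ('r \<times> var list) list \<Rightarrow> 'r \<Rightarrow> sterm list \<Rightarrow> bool" where
  "canon_rel k P R ts \<longleftrightarrow>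
     (\<exists>vs s. (R, vs) \<in> set P \<and> (\<forall>i\<in>{1..k}. s i \<in> closed_terms k) \<and> ts = map (sk_subst s) vs)"

definition is_structure :: "'r set \<Rightarrow> ('r \<Rightarrow> nat) \<Rightarrow> 'b set \<Rightarrow> ('r \<Rightarrow> 'b list \<Rightarrow> bool) \<Rightarrow> bool" where
  "is_structure sig ar B I \<longleftrightarrow> B \<noteq> {} \<and>
     (\<forall>R\<in>sig. \<forall>bs. I R bs \<longrightarrow> length bs = ar R \<and> set bs \<subseteq> B)"

text \<open>Satisfaction of forall x_j exists y_j ... forall x_k exists y_k P, with n = k - j + 1
  quantifier pairs remaining.\<close>
primrec qsat :: "'b set \<Rightarrow> ('r \<Rightarrow> 'b list \<Rightarrow> bool) \<Rightarrow> nat \<Rightarrow> ('r \<times> var list) list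
                 \<Rightarrow> nat \<Rightarrow> (var \<Rightarrow> 'b) \<Rightarrow> bool" where
  "qsat B I k P 0 env = (\<forall>(R, vs) \<in> set P. I R (map env vs))"
| "qsat B I k P (Suc n) env =
     (\<forall>b\<in>B. \<exists>c\<in>B. qsat B I k P n (env(X (k - n) := b, Y (k - n) := c)))"

definition models :: "'b set \<Rightarrow> ('r \<Rightarrow> 'b list \<Rightarrow> bool) \<Rightarrow> nat \<Rightarrow> ('r \<times> var list) list \<Rightarrow> bool" where
  "models B I k P \<longleftrightarrow> qsat B I k P k (\<lambda>_. undefined)"

definition canon_hom :: "'r set \<Rightarrow> nat \<Rightarrow> ('r \<times> var list) list \<Rightarrow> 'b set
                         \<Rightarrow> ('r \<Rightarrow> 'b list \<Rightarrow> bool) \<Rightarrow> (sterm \<Rightarrow> 'b) \<Rightarrow> bool" where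
  "canon_hom sig k P B I h \<longleftrightarrow>
     (\<forall>t\<in>closed_terms k. h t \<in> B) \<and>
     (\<forall>R\<in>sig. \<forall>ts. set ts \<subseteq> closed_terms k \<longrightarrow> canon_rel k P R ts \<longrightarrow> I R (map h ts))"

end

theory Submission
  imports Defs
begin

text \<open>Since \<open>B\<close> satisfies the sentence, the existential witnesses can be chosen as functions
  of the universal values before them: Skolem functions \<open>g\<^sub>i\<close> on \<open>B\<close>. Interpreting \<open>c\<^sub>n\<close> by an
  enumeration of the countable set \<open>B\<close> and \<open>f\<^sub>i\<close> by \<open>g\<^sub>i\<close> yields a map on terms that is onto
  already on the constants, and it is a homomorphism because every atom of the canonical
  model is an instance of a matrix atom under the Skolem functions, which holds in \<open>B\<close>.\<close>

context
  fixes B :: "'b set" and I :: "'r \<Rightarrow> 'b list \<Rightarrow> bool" and k :: nat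
    and P :: "('r \<times> var list) list"
begin

definition skolem_choice :: "(var \<Rightarrow> 'b) \<Rightarrow> nat \<Rightarrow> 'b \<Rightarrow> 'b" where
  "skolem_choice env i b = (SOME c. c \<in> B \<and> qsat B I k P (k - i) (env(X i := b, Y i := c)))"

text \<open>The environment after the first \<open>n\<close> quantifier pairs when \<open>x\<^sub>i\<close> takes the value \<open>a i\<close>
  and \<open>y\<^sub>i\<close> the chosen witness; it is built by the same updates as in \<open>qsat\<close>, so that
  \<open>skolem_env a i (Y i)\<close> is the Skolem function \<open>g\<^sub>i\<close> at \<open>a 1, \<dots>, a i\<close>.\<close>

primrec skolem_env :: "(nat \<Rightarrow> 'b) \<Rightarrow> nat \<Rightarrow> var \<Rightarrow> 'b" where
  "skolem_env a 0 = (\<lambda>_. undefined)"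
| "skolem_env a (Suc n) =
     (skolem_env a n)(X (Suc n) := a (Suc n),
                      Y (Suc n) := skolem_choice (skolem_env a n) (Suc n) (a (Suc n)))"

lemma skolem_env_satisfies:
  assumes "models B I k P" and "n \<le> k" and "a ` {1..n} \<subseteq> B"
  shows "qsat B I k P (k - n) (skolem_env a n) \<and> (\<forall>j\<in>{1..n}. skolem_env a n (Y j) \<in> B)"
  using assms(2,3)
proof (induction n)
  case 0
  then show ?case using assms(1) by (simp add: models_def)
next
  case (Suc n)
  let ?e = "skolem_env a n"
  have "a ` {1..n} \<subseteq> B" using Suc.prems(2) by auto
  with Suc have IH: "qsat B I k P (k - n) ?e" "\<forall>j\<in>{1..n}. ?e (Y j) \<in> B"
    by auto
  have remaining: "k - n = Suc (k - Suc n)" and bound: "k - (k - Suc n) = Suc n"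
    using Suc.prems(1) by auto
  from IH(1) have "\<forall>b\<in>B. \<exists>c\<in>B. qsat B I k P (k - Suc n) (?e(X (Suc n) := b, Y (Suc n) := c))"
    unfolding remaining qsat.simps bound .
  moreover have "a (Suc n) \<in> B" using Suc.prems by auto
  ultimately obtain c where
    "c \<in> B \<and> qsat B I k P (k - Suc n) (?e(X (Suc n) := a (Suc n), Y (Suc n) := c))"
    by blast
  then have "skolem_choice ?e (Suc n) (a (Suc n)) \<in> B \<and>
      qsat B I k P (k - Suc n)
        (?e(X (Suc n) := a (Suc n), Y (Suc n) := skolem_choice ?e (Suc n) (a (Suc n))))"
    unfolding skolem_choice_def by (rule someI)
  then have "qsat B I k P (k - Suc n) (skolem_env a (Suc n))"
    and "skolem_env a (Suc n) (Y (Suc n)) \<in> B"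
    by (simp_all only: skolem_env.simps fun_upd_same)
  moreover from this(2) IH(2) have "\<forall>j\<in>{1..Suc n}. skolem_env a (Suc n) (Y j) \<in> B"
    by (auto simp: le_Suc_eq)
  ultimately show ?case by blast
qed

lemma skolem_env_cong:
  assumes "\<forall>j\<in>{1..n}. a j = a' j"
  shows "skolem_env a n = skolem_env a' n"
  using assms by (induction n) auto

lemma skolem_env_X:
  "1 \<le> j \<Longrightarrow> j \<le> n \<Longrightarrow> skolem_env a n (X j) = a j"
  by (induction n) (auto simp: le_Suc_eq)

lemma skolem_env_Y:
  "1 \<le> j \<Longrightarrow> j \<le> n \<Longrightarrow> skolem_env a n (Y j) = skolem_env a j (Y j)"
  by (induction n) (auto simp: le_Suc_eq)

fun skolem_hom :: "sterm \<Rightarrow> 'b" where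
  "skolem_hom (C n) = from_nat_into B n"
| "skolem_hom (F i ts) = skolem_env (\<lambda>j. map skolem_hom ts ! (j - 1)) i (Y i)"

lemma skolem_hom_in_carrier:
  assumes "models B I k P" and "B \<noteq> {}" and "t \<in> closed_terms k"
  shows "skolem_hom t \<in> B"
  using assms(3)
proof (induction rule: closed_terms.induct)
  case (const n)
  then show ?case using from_nat_into[OF assms(2)] by simp
next
  case (func i ts)
  have "(\<lambda>j. map skolem_hom ts ! (j - 1)) ` {1..i} \<subseteq> B"
    using func by auto
  then show ?case using skolem_env_satisfies[OF assms(1) \<open>i \<le> k\<close>] \<open>1 \<le> i\<close> by auto
qed

lemma skolem_hom_sk_subst:
  assumes "1 \<le> j" and "j \<le> k" and "v = X j \<or> v = Y j"
  shows "skolem_hom (sk_subst s v) = skolem_env (skolem_hom \<circ> s) k v"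
proof (cases "v = X j")
  case True
  then show ?thesis using assms by (simp add: skolem_env_X)
next
  case False
  with assms(3) have v: "v = Y j" by simp
  have "skolem_env (\<lambda>l. map skolem_hom (map s [1..<Suc j]) ! (l - 1)) j =
      skolem_env (skolem_hom \<circ> s) j"
    by (rule skolem_env_cong) (clarsimp simp: nth_map_upt simp del: upt_Suc)
  then have "skolem_hom (sk_subst s v) = skolem_env (skolem_hom \<circ> s) j (Y j)"
    using v by simp
  also have "\<dots> = skolem_env (skolem_hom \<circ> s) k v"
    using v skolem_env_Y[OF assms(1,2)] by simp
  finally show ?thesis .
qed

lemma skolem_hom_canon_hom:
  assumes "models B I k P" and "B \<noteq> {}" and "wf_matrix sig ar k P"
  shows "canon_hom sig k P B I skolem_hom"
proof -
  have "I R (map skolem_hom ts)" if "canon_rel k P R ts" for R ts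
  proof -
    from that obtain vs s where vs: "(R, vs) \<in> set P" and s: "\<forall>i\<in>{1..k}. s i \<in> closed_terms k"
      and ts: "ts = map (sk_subst s) vs" unfolding canon_rel_def by blast
    let ?e = "skolem_env (skolem_hom \<circ> s) k"
    have "(skolem_hom \<circ> s) ` {1..k} \<subseteq> B"
      using s skolem_hom_in_carrier[OF assms(1,2)] by auto
    then have "qsat B I k P 0 ?e"
      using skolem_env_satisfies[OF assms(1) order_refl] by simp
    then have "I R (map ?e vs)" using vs by auto
    moreover have "map skolem_hom ts = map ?e vs"
      using ts vs assms(3) by (fastforce simp: wf_matrix_def intro: skolem_hom_sk_subst)
    ultimately show ?thesis by simp
  qed
  then show ?thesis
    using skolem_hom_in_carrier[OF assms(1,2)] by (simp add: canon_hom_def)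
qed

end

theorem mainTheorem9:
  fixes sig :: "'r set" and ar :: "'r \<Rightarrow> nat" and k :: nat
    and P :: "('r \<times> var list) list"
    and B :: "'b set" and I :: "'r \<Rightarrow> 'b list \<Rightarrow> bool"
  assumes "finite sig"
    and "wf_matrix sig ar k P"
    and "is_structure sig ar B I"
    and "countable B"
    and "models B I k P"
  shows "\<exists>h. canon_hom sig k P B I h \<and> h ` closed_terms k = B \<and> h ` range C = B"
proof -
  let ?h = "skolem_hom B I k P"
  have "B \<noteq> {}" using assms(3) by (simp add: is_structure_def)
  then have hom: "canon_hom sig k P B I ?h"
    using skolem_hom_canon_hom[OF assms(5) _ assms(2)] by blast
  have onto_constants: "?h ` range C = B"
    using range_from_nat_into[OF \<open>B \<noteq> {}\<close> assms(4)] by (simp add: image_image)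
  moreover have "range C \<subseteq> closed_terms k" by (auto intro: closed_terms.const)
  ultimately have "?h ` closed_terms k = B"
    using hom unfolding canon_hom_def by blast
  with hom onto_constants show ?thesis by blast
qed

end
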